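(* In the setting described in the context, given $\epsilon>0$ there is an integer $N(\epsilon)>0$ such that for every $K^u_\alpha$ curve $\gamma$ in $Q$, $$\rho_\gamma\Big(\gamma\cap\bigcup_{i\ge N(\epsilon)}E_i\Big)<\epsilon.$$
   Context: Let $Q=[0,1]^2$. Fix $0<\alpha<1$, $K^u_\alpha=\{(v_1,v_2):|v_2|\le\alpha|v_1|\}$; a $K^u_\alpha$ curve is a $C^2$ curve with all tangent vectors in $K^u_\alpha$; $\rho_\gamma$ is Riemannian (arc length) measure on $\gamma$. Let $E_1,E_2,\dots$ be a countable collection of closed curvilinear rectangles in $Q$, each bounded above and below by subintervals of $\{y=1\}$, $\{y=0\}$ and on the left and right by graphs $x=x^{(i)}(y)$ of smooth functions with $|dx^{(i)}/dy|\le\alpha$. For $z\in Q$, $\ell_z$ is the horizontal line through $z$, $\delta_z(E)=\operatorname{diam}(\ell_z\cap E)$, $\delta_{i,\max}=\max_{z\in Q}\delta_z(E_i)$, $\delta_{i,\min}=\min_{z\in Q}\delta_z(E_i)$. Assume (G1) $\operatorname{int}E_i\cap\operatorname{int}E_j=\emptyset$ for $i\ne j$; (G2) $Q\setminus\bigcup_i\operatorname{int}E_i$ has Lebesgue measure $0$; (G3) $-\sum_i\delta_{i,\max}\log\delta_{i,\min}<\infty$. (In the paper these posts are the domains of $C^2$ diffeomorphisms $f_i$ satisfying further hyperbolicity and distortion conditions, which are not needed to state this result.) *)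

theory Defs
  imports "HOL-Analysis.Analysis"
begin

definition unit_square :: "(real \<times> real) set" where
  "unit_square = {0..1} \<times> {0..1}"

definition Ku_cone :: "real \<Rightarrow> (real \<times> real) set" where
  "Ku_cone \<alpha> = {v. \<bar>snd v\<bar> \<le> \<alpha> * \<bar>fst v\<bar>}"

definition smooth_on_unit :: "(real \<Rightarrow> real) \<Rightarrow> bool" where
  "smooth_on_unit f \<longleftrightarrow> (\<exists>U. open U \<and> {0..1} \<subseteq> U \<and>
      (\<forall>k. \<forall>y\<in>U. ((deriv ^^ k) f) differentiable (at y)))"

definition curv_rect :: "real \<Rightarrow> (real \<times> real) set \<Rightarrow> bool" where
  "curv_rect \<alpha> E \<longleftrightarrow> (\<exists>xl xr. smooth_on_unit xl \<and> smooth_on_unit xr \<and>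
      (\<forall>y\<in>{0..1}. 0 \<le> xl y \<and> xl y < xr y \<and> xr y \<le> 1 \<and>
                   \<bar>deriv xl y\<bar> \<le> \<alpha> \<and> \<bar>deriv xr y\<bar> \<le> \<alpha>) \<and>
      E = {(x, y). 0 \<le> y \<and> y \<le> 1 \<and> xl y \<le> x \<and> x \<le> xr y})"

definition hdelta :: "real \<times> real \<Rightarrow> (real \<times> real) set \<Rightarrow> real" where
  "hdelta z E = diameter ({p. snd p = snd z} \<inter> E)"

definition delta_max :: "(real \<times> real) set \<Rightarrow> real" where
  "delta_max E = (SUP z\<in>unit_square. hdelta z E)"

definition delta_min :: "(real \<times> real) set \<Rightarrow> real" where
  "delta_min E = (INF z\<in>unit_square. hdelta z E)"

definition tangent :: "real \<Rightarrow> real \<Rightarrow> (real \<Rightarrow> real \<times> real) \<Rightarrow> real \<Rightarrow> real \<times> real" where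
  "tangent a b c t = vector_derivative c (at t within {a..b})"

definition C2_curve :: "real \<Rightarrow> real \<Rightarrow> (real \<Rightarrow> real \<times> real) \<Rightarrow> bool" where
  "C2_curve a b c \<longleftrightarrow> a < b \<and>
     (\<forall>t\<in>{a..b}. c differentiable (at t within {a..b})) \<and>
     (\<forall>t\<in>{a..b}. (tangent a b c) differentiable (at t within {a..b})) \<and>
     continuous_on {a..b} (tangent a b (tangent a b c))"

definition Ku_curve :: "real \<Rightarrow> real \<Rightarrow> real \<Rightarrow> (real \<Rightarrow> real \<times> real) \<Rightarrow> bool" where
  "Ku_curve \<alpha> a b c \<longleftrightarrow> C2_curve a b c \<and>
     (\<forall>t\<in>{a..b}. tangent a b c t \<noteq> 0 \<and> tangent a b c t \<in> Ku_cone \<alpha>)"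

definition arc_measure :: "real \<Rightarrow> real \<Rightarrow> (real \<Rightarrow> real \<times> real) \<Rightarrow> (real \<times> real) set \<Rightarrow> real" where
  "arc_measure a b c S = (LINT t : {t\<in>{a..b}. c t \<in> S} | lborel. norm (tangent a b c t))"

end

theory Submission
  imports Defs
begin

text \<open>Each post \<open>E i\<close> is a strip between two \<open>\<alpha>\<close>-Lipschitz graphs over the \<open>y\<close>-axis, while a
  \<open>K\<^sup>u\<^sub>\<alpha>\<close> curve is a graph over the \<open>x\<close>-axis with slope at most \<open>\<alpha>\<close>. Between its first and
  last visit to \<open>E i\<close> the curve therefore moves horizontally by at most
  \<open>delta_max (E i) / (1 - \<alpha>\<^sup>2)\<close>, so its length inside \<open>E i\<close> is at most
  \<open>delta_max (E i) / (1 - \<alpha>)\<close>, uniformly in the curve. The interiors of the posts cut disjoint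
  intervals out of the line \<open>y = 1/2\<close>, hence \<open>delta_min (E i) \<rightarrow> 0\<close>; then (G3) dominates
  \<open>\<Sum>i. delta_max (E i)\<close>, and \<open>N(\<epsilon>)\<close> is taken where the tail of this series is below
  \<open>\<epsilon>\<close>.\<close>

definition strip_between :: "(real \<Rightarrow> real) \<Rightarrow> (real \<Rightarrow> real) \<Rightarrow> (real \<times> real) set" where
  "strip_between xl xr = {(x, y). 0 \<le> y \<and> y \<le> 1 \<and> xl y \<le> x \<and> x \<le> xr y}"

lemma smooth_on_unit_lipschitz_on:
  assumes f: "smooth_on_unit f" and f': "\<And>y. y \<in> {0..1} \<Longrightarrow> \<bar>deriv f y\<bar> \<le> \<alpha>"
  shows "\<alpha>-lipschitz_on {0..1} f"
proof (rule lipschitz_onI)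
  obtain U where "{0..1} \<subseteq> U" and "\<forall>y\<in>U. ((deriv ^^ 0) f) differentiable (at y)"
    using f unfolding smooth_on_unit_def by blast
  then have "(f has_field_derivative deriv f y) (at y within {0..1})" if "y \<in> {0..1}" for y
    using that DERIV_deriv_iff_real_differentiable has_field_derivative_at_within by fastforce
  then show "dist (f x) (f y) \<le> \<alpha> * dist x y" if "x \<in> {0..1}" "y \<in> {0..1}" for x y
    using field_differentiable_bound[of "{0..1}" f "deriv f" \<alpha> x y] f' that
    by (simp add: dist_norm)
  show "0 \<le> \<alpha>"
    using f'[of 0] by simp
qed

lemma curv_rect_strip_between:
  assumes "curv_rect \<alpha> E"
  obtains xl xr where "\<alpha>-lipschitz_on {0..1} xl" and "\<alpha>-lipschitz_on {0..1} xr"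
    and "\<And>y. y \<in> {0..1} \<Longrightarrow> 0 \<le> xl y \<and> xl y < xr y \<and> xr y \<le> 1"
    and "E = strip_between xl xr"
proof -
  obtain xl xr where "smooth_on_unit xl" "smooth_on_unit xr"
    and bounds: "\<forall>y\<in>{0..1}. 0 \<le> xl y \<and> xl y < xr y \<and> xr y \<le> 1 \<and>
                   \<bar>deriv xl y\<bar> \<le> \<alpha> \<and> \<bar>deriv xr y\<bar> \<le> \<alpha>"
    and "E = strip_between xl xr"
    using assms unfolding curv_rect_def strip_between_def by blast
  moreover have "\<alpha>-lipschitz_on {0..1} xl" "\<alpha>-lipschitz_on {0..1} xr"
    using smooth_on_unit_lipschitz_on bounds \<open>smooth_on_unit xl\<close> \<open>smooth_on_unit xr\<close> by auto
  ultimately show thesis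
    using that by auto
qed

lemma closed_strip_between:
  assumes "continuous_on {0..1} xl" "continuous_on {0..1} xr"
  shows "closed (strip_between xl xr)"
proof -
  let ?g = "\<lambda>p::real \<times> real. (fst p - xl (snd p), xr (snd p) - fst p)"
  have "continuous_on (UNIV \<times> {0..1}) ?g"
    by (intro continuous_intros continuous_on_compose2[OF assms(1)]
        continuous_on_compose2[OF assms(2)]) auto
  moreover have "strip_between xl xr = (UNIV \<times> {0..1}) \<inter> ?g -` ({0..} \<times> {0..})"
    by (auto simp: strip_between_def)
  ultimately show ?thesis
    by (simp add: continuous_closed_preimage closed_Times)
qed

lemma mem_interior_strip_between:
  assumes "continuous_on {0..1} xl" "continuous_on {0..1} xr"
    and "y \<in> {0<..<1}" "xl y < x" "x < xr y"
  shows "(x, y) \<in> interior (strip_between xl xr)"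
proof -
  let ?g = "\<lambda>p::real \<times> real. (fst p - xl (snd p), xr (snd p) - fst p)"
  let ?W = "(UNIV \<times> {0<..<1}) \<inter> ?g -` ({0<..} \<times> {0<..})"
  have "continuous_on (UNIV \<times> {0<..<1}) ?g"
    by (intro continuous_intros continuous_on_compose2[OF assms(1)]
        continuous_on_compose2[OF assms(2)]) auto
  then have "open ?W"
    by (simp add: continuous_open_preimage open_Times)
  moreover have "?W \<subseteq> strip_between xl xr"
    by (auto simp: strip_between_def)
  moreover have "(x, y) \<in> ?W"
    using assms(3-5) by auto
  ultimately show ?thesis
    by (meson interior_maximal subsetD)
qed

lemma hdelta_strip_between:
  assumes "snd z \<in> {0..1}" "xl (snd z) \<le> xr (snd z)"
  shows "hdelta z (strip_between xl xr) = xr (snd z) - xl (snd z)"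
proof -
  define y where "y = snd z"
  have slice: "{p. snd p = y} \<inter> strip_between xl xr = {xl y..xr y} \<times> {y}"
    using assms(1) by (auto simp: strip_between_def y_def)
  have le: "xl y \<le> xr y"
    using assms(2) by (simp add: y_def)
  have "diameter ({xl y..xr y} \<times> {y}) \<le> xr y - xl y"
    by (rule diameter_le) (use le in \<open>auto simp: norm_Pair\<close>)
  moreover have "dist (xl y, y) (xr y, y) \<le> diameter ({xl y..xr y} \<times> {y})"
    by (rule diameter_bounded_bound) (use le in \<open>auto simp: bounded_Times\<close>)
  ultimately show ?thesis
    unfolding hdelta_def y_def[symmetric] slice by (simp add: dist_Pair_Pair dist_real_def)
qed

lemma hdelta_strip_between_image:
  assumes "\<And>y. y \<in> {0..1} \<Longrightarrow> xl y \<le> xr y"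
  shows "(\<lambda>z. hdelta z (strip_between xl xr)) ` unit_square = (\<lambda>y. xr y - xl y) ` {0..1}"
proof -
  have "(\<lambda>z. hdelta z (strip_between xl xr)) ` unit_square
        = (\<lambda>y. xr y - xl y) ` (snd ` unit_square)"
    unfolding image_image
    by (rule image_cong) (auto simp: unit_square_def hdelta_strip_between assms)
  then show ?thesis
    by (simp add: unit_square_def)
qed

lemma strip_between_delta_min_pos:
  assumes "continuous_on {0..1} xl" "continuous_on {0..1} xr"
    and "\<And>y. y \<in> {0..1} \<Longrightarrow> xl y < xr y"
  shows "0 < delta_min (strip_between xl xr)"
proof -
  have "continuous_on {0..1} (\<lambda>y. xr y - xl y)"
    using assms(1,2) by (intro continuous_intros)
  then have "\<exists>y0\<in>{0..1}. \<forall>y\<in>{0..1}. xr y0 - xl y0 \<le> xr y - xl y"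
    by (intro continuous_attains_inf) auto
  then obtain y0 where y0: "y0 \<in> {0..1}" "\<And>y. y \<in> {0..1} \<Longrightarrow> xr y0 - xl y0 \<le> xr y - xl y"
    by blast
  have "(\<lambda>z. hdelta z (strip_between xl xr)) ` unit_square = (\<lambda>y. xr y - xl y) ` {0..1}"
    using assms(3) by (intro hdelta_strip_between_image less_imp_le)
  then have "xr y0 - xl y0 \<le> delta_min (strip_between xl xr)"
    unfolding delta_min_def using y0 by (auto intro: cINF_greatest)
  moreover have "0 < xr y0 - xl y0"
    using assms(3) y0(1) by simp
  ultimately show ?thesis
    by linarith
qed

lemma strip_between_width_bounds:
  assumes "continuous_on {0..1} xl" "continuous_on {0..1} xr"
    and "\<And>y. y \<in> {0..1} \<Longrightarrow> xl y \<le> xr y" and "y \<in> {0..1}"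
  shows "delta_min (strip_between xl xr) \<le> xr y - xl y"
    and "xr y - xl y \<le> delta_max (strip_between xl xr)"
proof -
  have "compact ((\<lambda>y. xr y - xl y) ` {0..1})"
    using assms(1,2) by (intro compact_continuous_image continuous_intros) auto
  then have "bounded ((\<lambda>y. xr y - xl y) ` {0..1})"
    by (rule compact_imp_bounded)
  moreover have image: "(\<lambda>z. hdelta z (strip_between xl xr)) ` unit_square = (\<lambda>y. xr y - xl y) ` {0..1}"
    using assms(3) by (rule hdelta_strip_between_image)
  ultimately show "delta_min (strip_between xl xr) \<le> xr y - xl y"
    and "xr y - xl y \<le> delta_max (strip_between xl xr)"
    unfolding delta_min_def delta_max_def image
    using assms(4) by (auto intro: cINF_lower cSUP_upper bounded_imp_bdd_below bounded_imp_bdd_above)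
qed

lemma strip_between_chord_le:
  assumes p1: "(x1, y1) \<in> strip_between xl xr" and p2: "(x2, y2) \<in> strip_between xl xr"
    and xl: "\<alpha>-lipschitz_on {0..1} xl" and width: "\<And>y. y \<in> {0..1} \<Longrightarrow> xr y - xl y \<le> \<delta>"
    and slope: "\<bar>y2 - y1\<bar> \<le> \<alpha> * \<bar>x2 - x1\<bar>" and "\<alpha> < 1"
  shows "\<bar>x2 - x1\<bar> \<le> \<delta> / (1 - \<alpha>\<^sup>2)"
proof -
  have "0 \<le> \<alpha>"
    using xl by (rule lipschitz_on_nonneg)
  have y: "y1 \<in> {0..1}" "y2 \<in> {0..1}" and x: "xl y1 \<le> x1" "x1 \<le> xr y1" "xl y2 \<le> x2" "x2 \<le> xr y2"
    using p1 p2 by (auto simp: strip_between_def)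
  have "\<bar>xl y2 - xl y1\<bar> \<le> \<alpha> * \<bar>y2 - y1\<bar>"
    using lipschitz_onD[OF xl y(2) y(1)] by (simp add: dist_real_def)
  also have "\<dots> \<le> \<alpha> * (\<alpha> * \<bar>x2 - x1\<bar>)"
    using slope \<open>0 \<le> \<alpha>\<close> by (rule mult_left_mono)
  finally have "\<bar>xl y2 - xl y1\<bar> \<le> \<alpha>\<^sup>2 * \<bar>x2 - x1\<bar>"
    by (simp add: power2_eq_square)
  \<comment> \<open>crossing from one wall at height \<open>y1\<close> to the other at height \<open>y2\<close> costs a width plus
      the drift of \<open>xl\<close>\<close>
  then have "\<bar>x2 - x1\<bar> \<le> \<delta> + \<alpha>\<^sup>2 * \<bar>x2 - x1\<bar>"
    using x width[OF y(1)] width[OF y(2)] by (auto simp: abs_le_iff)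
  moreover have "\<alpha>\<^sup>2 < 1"
    using \<open>0 \<le> \<alpha>\<close> \<open>\<alpha> < 1\<close> by (simp add: power_less_one_iff)
  ultimately show ?thesis
    by (simp add: pos_le_divide_eq algebra_simps)
qed

lemma curv_rect_strip_between_continuous:
  assumes "curv_rect \<alpha> E"
  obtains xl xr where "continuous_on {0..1} xl" and "continuous_on {0..1} xr"
    and "\<And>y. y \<in> {0..1} \<Longrightarrow> 0 \<le> xl y \<and> xl y < xr y \<and> xr y \<le> 1"
    and "E = strip_between xl xr"
proof -
  obtain xl xr where "\<alpha>-lipschitz_on {0..1} xl" "\<alpha>-lipschitz_on {0..1} xr"
    and "\<And>y. y \<in> {0..1} \<Longrightarrow> 0 \<le> xl y \<and> xl y < xr y \<and> xr y \<le> 1"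
    and "E = strip_between xl xr"
    using curv_rect_strip_between[OF assms] by blast
  then show thesis
    using that lipschitz_on_continuous_on by blast
qed

lemma curv_rect_subset_unit_square:
  assumes "curv_rect \<alpha> E"
  shows "E \<subseteq> unit_square"
proof -
  obtain xl xr where "\<And>y. y \<in> {0..1} \<Longrightarrow> 0 \<le> xl y \<and> xl y < xr y \<and> xr y \<le> 1"
    and "E = strip_between xl xr"
    using curv_rect_strip_between[OF assms] by blast
  then show ?thesis
    by (force simp: strip_between_def unit_square_def)
qed

lemma curv_rect_closed:
  assumes "curv_rect \<alpha> E"
  shows "closed E"
proof -
  obtain xl xr where "continuous_on {0..1} xl" "continuous_on {0..1} xr"
    and "E = strip_between xl xr"
    using curv_rect_strip_between_continuous[OF assms] by blast
  then show ?thesis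
    by (simp add: closed_strip_between)
qed

lemma curv_rect_delta_min_pos:
  assumes "curv_rect \<alpha> E"
  shows "0 < delta_min E"
proof -
  obtain xl xr where "continuous_on {0..1} xl" "continuous_on {0..1} xr"
    and "\<And>y. y \<in> {0..1} \<Longrightarrow> 0 \<le> xl y \<and> xl y < xr y \<and> xr y \<le> 1"
    and "E = strip_between xl xr"
    using curv_rect_strip_between_continuous[OF assms] by blast
  then show ?thesis
    by (auto intro: strip_between_delta_min_pos)
qed

lemma curv_rect_delta_max_nonneg:
  assumes "curv_rect \<alpha> E"
  shows "0 \<le> delta_max E"
proof -
  obtain xl xr where "continuous_on {0..1} xl" "continuous_on {0..1} xr"
    and lt: "\<And>y. y \<in> {0..1} \<Longrightarrow> 0 \<le> xl y \<and> xl y < xr y \<and> xr y \<le> 1"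
    and E: "E = strip_between xl xr"
    using curv_rect_strip_between_continuous[OF assms] by blast
  moreover have "xr 0 - xl 0 \<le> delta_max (strip_between xl xr)"
    using calculation lt by (intro strip_between_width_bounds(2) less_imp_le) auto
  moreover have "xl 0 < xr 0"
    using lt by simp
  ultimately show ?thesis
    unfolding E by linarith
qed

lemma curv_rect_delta_min_le_slice:
  assumes "curv_rect \<alpha> E" and y: "y \<in> {0<..<1}"
  shows "delta_min E \<le> measure lborel ((\<lambda>x. (x, y)) -` interior E)"
proof -
  obtain xl xr where cont: "continuous_on {0..1} xl" "continuous_on {0..1} xr"
    and bounds: "\<And>y. y \<in> {0..1} \<Longrightarrow> 0 \<le> xl y \<and> xl y < xr y \<and> xr y \<le> 1"
    and E: "E = strip_between xl xr"
    using curv_rect_strip_between_continuous[OF assms(1)] by blast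
  have "delta_min E \<le> xr y - xl y"
    unfolding E using y bounds by (intro strip_between_width_bounds(1) cont less_imp_le) auto
  also have "\<dots> = measure lborel {xl y<..<xr y}"
    using y bounds[of y] by simp
  also have "\<dots> \<le> measure lborel ((\<lambda>x. (x, y)) -` interior E)"
  proof (rule measure_mono_fmeasurable)
    show "{xl y<..<xr y} \<subseteq> (\<lambda>x. (x, y)) -` interior E"
      unfolding E using y mem_interior_strip_between[OF cont] by auto
    have "open ((\<lambda>x. (x, y)) -` interior E)"
      by (intro continuous_open_vimage) (auto intro: continuous_intros)
    then have "(\<lambda>x. (x, y)) -` interior E \<in> sets lborel"
      by simp
    moreover have "(\<lambda>x. (x, y)) -` interior E \<subseteq> {0..1}"
      using interior_subset curv_rect_subset_unit_square[OF assms(1)]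
      by (auto simp: unit_square_def)
    ultimately show "(\<lambda>x. (x, y)) -` interior E \<in> fmeasurable lborel"
      using fmeasurableI2[OF fmeasurable_cbox[of "0::real" 1]] by (simp add: cbox_interval)
  qed simp
  finally show ?thesis .
qed

lemma measure_disjoint_family_tendsto_zero:
  assumes "disjoint_family I" and "\<And>i. I i \<in> sets M"
    and "S \<in> sets M" and "\<And>i. I i \<subseteq> S" and "emeasure M S < \<infinity>"
  shows "(\<lambda>i. measure M (I i)) \<longlonglongrightarrow> 0"
proof -
  have "emeasure M (\<Union>i. I i) \<le> emeasure M S"
    using assms(3,4) by (intro emeasure_mono) auto
  then have "emeasure M (\<Union>i. I i) \<noteq> \<infinity>"
    using assms(5) by (auto simp: top_unique)
  then have "(\<lambda>i. measure M (I i)) sums measure M (\<Union>i. I i)"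
    using assms(1,2) by (intro measure_UNION) auto
  then show ?thesis
    by (intro summable_LIMSEQ_zero sums_summable)
qed

lemma summable_of_summable_neg_mult_ln:
  fixes d e :: "nat \<Rightarrow> real"
  assumes "summable (\<lambda>i. - d i * ln (e i))" and "e \<longlonglongrightarrow> 0"
    and "\<And>i. 0 < e i" and "\<And>i. 0 \<le> d i"
  shows "summable d"
proof -
  obtain N where N: "\<And>i. i \<ge> N \<Longrightarrow> e i < exp (-1)"
    using order_tendstoD(2)[OF assms(2), of "exp (-1)"] by (auto simp: eventually_sequentially)
  have "norm (d i) \<le> - d i * ln (e i)" if "i \<ge> N" for i
  proof -
    have "ln (e i) < ln (exp (-1))"
      using N[OF that] assms(3)[of i] by (subst ln_less_cancel_iff) auto
    then have "ln (e i) \<le> -1"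
      by simp
    then have "d i * 1 \<le> d i * - ln (e i)"
      using assms(4)[of i] by (intro mult_left_mono) auto
    then show ?thesis
      using assms(4)[of i] by simp
  qed
  then show ?thesis
    by (rule summable_comparison_test'[OF assms(1)])
qed

lemma summable_delta_max:
  assumes rect: "\<And>i. curv_rect \<alpha> (E i)"
    and disj: "\<And>i j. i \<noteq> j \<Longrightarrow> interior (E i) \<inter> interior (E j) = {}"
    and sum: "summable (\<lambda>i. - delta_max (E i) * ln (delta_min (E i)))"
  shows "summable (\<lambda>i. delta_max (E i))"
proof -
  define I where "I i = (\<lambda>x. (x, 1/2::real)) -` interior (E i)" for i
  have slices: "(\<lambda>i. measure lborel (I i)) \<longlonglongrightarrow> 0"
  proof (rule measure_disjoint_family_tendsto_zero)
    show "disjoint_family I"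
      using disj by (auto simp: disjoint_family_on_def I_def)
    have "open (I i)" for i
      unfolding I_def by (intro continuous_open_vimage) (auto intro: continuous_intros)
    then show "I i \<in> sets lborel" for i
      by simp
    show "I i \<subseteq> {0..1}" for i
      using interior_subset curv_rect_subset_unit_square[OF rect] by (auto simp: I_def unit_square_def)
  qed auto
  have "\<forall>i. 0 \<le> delta_min (E i)"
    using curv_rect_delta_min_pos[OF rect] less_imp_le by blast
  moreover have "\<forall>i. delta_min (E i) \<le> measure lborel (I i)"
    unfolding I_def using curv_rect_delta_min_le_slice[OF rect] by simp
  ultimately have "(\<lambda>i. delta_min (E i)) \<longlonglongrightarrow> 0"
    by (intro tendsto_sandwich[OF _ _ tendsto_const slices] always_eventually)
  then show ?thesis
    using curv_rect_delta_min_pos[OF rect] curv_rect_delta_max_nonneg[OF rect]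
    by (rule summable_of_summable_neg_mult_ln[OF sum])
qed

lemma C2_curve_has_vector_derivative:
  assumes "C2_curve a b c" "t \<in> {a..b}"
  shows "(c has_vector_derivative tangent a b c t) (at t within {a..b})"
  using assms unfolding C2_curve_def tangent_def by (metis vector_derivative_works)

lemma C2_curve_continuous_on: "C2_curve a b c \<Longrightarrow> continuous_on {a..b} c"
  unfolding C2_curve_def by (meson differentiable_imp_continuous_on differentiable_on_def)

lemma C2_curve_continuous_on_tangent: "C2_curve a b c \<Longrightarrow> continuous_on {a..b} (tangent a b c)"
  unfolding C2_curve_def by (meson differentiable_imp_continuous_on differentiable_on_def)

lemma C2_curve_tangent_has_integral:
  assumes "C2_curve a b c" "a \<le> s" "s \<le> t" "t \<le> b"
  shows "(tangent a b c has_integral c t - c s) {s..t}"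
proof (rule fundamental_theorem_of_calculus[OF \<open>s \<le> t\<close>])
  fix u assume "u \<in> {s..t}"
  then have "(c has_vector_derivative tangent a b c u) (at u within {a..b})"
    using assms by (intro C2_curve_has_vector_derivative) auto
  then show "(c has_vector_derivative tangent a b c u) (at u within {s..t})"
    by (rule has_vector_derivative_within_subset) (use assms in auto)
qed

lemma Ku_cone_fst_neq_0: "v \<in> Ku_cone \<alpha> \<Longrightarrow> v \<noteq> 0 \<Longrightarrow> fst v \<noteq> 0"
  by (auto simp: Ku_cone_def prod_eq_iff)

lemma norm_le_Ku_cone: "v \<in> Ku_cone \<alpha> \<Longrightarrow> norm v \<le> (1 + \<alpha>) * \<bar>fst v\<bar>"
  using norm_Pair_le[of "fst v" "snd v"] by (auto simp: Ku_cone_def algebra_simps)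

lemma Ku_curve_fst_tangent_sign:
  assumes "Ku_curve \<alpha> a b c"
  shows "(\<forall>t\<in>{a..b}. 0 < fst (tangent a b c t)) \<or> (\<forall>t\<in>{a..b}. fst (tangent a b c t) < 0)"
proof (rule ccontr)
  let ?h = "\<lambda>t. fst (tangent a b c t)"
  assume "\<not> ?thesis"
  then obtain s t where st: "s \<in> {a..b}" "t \<in> {a..b}" "?h s \<le> 0" "0 \<le> ?h t"
    by (meson not_less)
  have "connected (?h ` {a..b})"
    using assms C2_curve_continuous_on_tangent unfolding Ku_curve_def
    by (intro connected_continuous_image continuous_intros) auto
  then have "0 \<in> ?h ` {a..b}"
    using st unfolding connected_iff_interval by blast
  moreover have "0 \<notin> ?h ` {a..b}"
    using assms Ku_cone_fst_neq_0 unfolding Ku_curve_def by fastforce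
  ultimately show False
    by blast
qed

lemma Ku_curve_abs_fst_tangent_has_integral:
  assumes K: "Ku_curve \<alpha> a b c" and st: "a \<le> s" "s \<le> t" "t \<le> b"
  shows "((\<lambda>u. \<bar>fst (tangent a b c u)\<bar>) has_integral \<bar>fst (c t) - fst (c s)\<bar>) {s..t}"
proof -
  have "C2_curve a b c"
    using K by (simp add: Ku_curve_def)
  from has_integral_linear[OF C2_curve_tangent_has_integral[OF this st] bounded_linear_fst]
  have fst_int: "((\<lambda>u. fst (tangent a b c u)) has_integral fst (c t) - fst (c s)) {s..t}"
    by (simp add: o_def)
  have sub: "{s..t} \<subseteq> {a..b}"
    using st by auto
  from Ku_curve_fst_tangent_sign[OF K] show ?thesis
  proof
    assume "\<forall>u\<in>{a..b}. 0 < fst (tangent a b c u)"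
    then have pos: "\<And>u. u \<in> {s..t} \<Longrightarrow> 0 < fst (tangent a b c u)"
      using sub by blast
    then have "0 \<le> fst (c t) - fst (c s)"
      by (intro has_integral_nonneg[OF fst_int] less_imp_le)
    then show ?thesis
      using fst_int pos
      by (subst has_integral_cong[where g="\<lambda>u. fst (tangent a b c u)"]) (auto simp: abs_of_pos)
  next
    assume "\<forall>u\<in>{a..b}. fst (tangent a b c u) < 0"
    then have neg: "\<And>u. u \<in> {s..t} \<Longrightarrow> fst (tangent a b c u) < 0"
      using sub by blast
    have neg_int: "((\<lambda>u. - fst (tangent a b c u)) has_integral - (fst (c t) - fst (c s))) {s..t}"
      using fst_int by (rule has_integral_neg)
    then have "0 \<le> - (fst (c t) - fst (c s))"
      using neg by (intro has_integral_nonneg[OF neg_int]) (simp add: less_imp_le)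
    then show ?thesis
      using neg_int neg
      by (subst has_integral_cong[where g="\<lambda>u. - fst (tangent a b c u)"]) (auto simp: abs_of_neg)
  qed
qed

lemma Ku_curve_snd_increment_le:
  assumes K: "Ku_curve \<alpha> a b c" and st: "a \<le> s" "s \<le> t" "t \<le> b"
  shows "\<bar>snd (c t) - snd (c s)\<bar> \<le> \<alpha> * \<bar>fst (c t) - fst (c s)\<bar>"
proof -
  have "C2_curve a b c"
    using K by (simp add: Ku_curve_def)
  from has_integral_linear[OF C2_curve_tangent_has_integral[OF this st] bounded_linear_snd]
  have snd_int: "((\<lambda>u. snd (tangent a b c u)) has_integral snd (c t) - snd (c s)) {s..t}"
    by (simp add: o_def)
  have bound_int: "((\<lambda>u. \<alpha> * \<bar>fst (tangent a b c u)\<bar>) has_integral \<alpha> * \<bar>fst (c t) - fst (c s)\<bar>) {s..t}"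
    using Ku_curve_abs_fst_tangent_has_integral[OF K st] by (rule has_integral_mult_right)
  have "norm (snd (tangent a b c u)) \<le> \<alpha> * \<bar>fst (tangent a b c u)\<bar>" if "u \<in> {s..t}" for u
    using K that st unfolding Ku_curve_def Ku_cone_def by auto
  then have "norm (integral {s..t} (\<lambda>u. snd (tangent a b c u)))
             \<le> integral {s..t} (\<lambda>u. \<alpha> * \<bar>fst (tangent a b c u)\<bar>)"
    using snd_int bound_int by (intro integral_norm_bound_integral) auto
  then show ?thesis
    using integral_unique[OF snd_int] integral_unique[OF Ku_curve_abs_fst_tangent_has_integral[OF K st]]
    by simp
qed

text \<open>Arc length \<open>\<rho>\<^sub>\<gamma>\<close> transported to the parameter line, so that countable subadditivity
  is available (see \<open>arc_measure_eq_measure\<close>).\<close>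

definition arc_length_measure :: "real \<Rightarrow> real \<Rightarrow> (real \<Rightarrow> real \<times> real) \<Rightarrow> real measure" where
  "arc_length_measure a b c =
     density lborel (\<lambda>t. ennreal (indicator {a..b} t * norm (tangent a b c t)))"

lemma C2_curve_speed_borel_measurable:
  assumes "C2_curve a b c"
  shows "(\<lambda>t. indicator {a..b} t * norm (tangent a b c t)) \<in> borel_measurable borel"
  using borel_measurable_continuous_on_indicator[of "{a..b}" "\<lambda>t. norm (tangent a b c t)"]
    C2_curve_continuous_on_tangent[OF assms] by (simp add: continuous_on_norm)

lemma emeasure_arc_length_measure:
  assumes "C2_curve a b c" and "A \<in> sets borel" and "A \<subseteq> {a..b}"
  shows "emeasure (arc_length_measure a b c) A
           = (\<integral>\<^sup>+t. ennreal (norm (tangent a b c t)) * indicator A t \<partial>lborel)"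
proof -
  have "emeasure (arc_length_measure a b c) A
          = (\<integral>\<^sup>+t. ennreal (indicator {a..b} t * norm (tangent a b c t)) * indicator A t \<partial>lborel)"
    unfolding arc_length_measure_def
    using assms C2_curve_speed_borel_measurable by (intro emeasure_density) auto
  also have "\<dots> = (\<integral>\<^sup>+t. ennreal (norm (tangent a b c t)) * indicator A t \<partial>lborel)"
    using assms(3) by (intro nn_integral_cong) (auto simp: indicator_def)
  finally show ?thesis .
qed

lemma C2_curve_closed_preimage:
  assumes "C2_curve a b c" and "closed S"
  shows "closed {t \<in> {a..b}. c t \<in> S}"
proof -
  have "closed ({a..b} \<inter> c -` S)"
    using C2_curve_continuous_on[OF assms(1)] assms(2) by (intro continuous_closed_preimage) auto
  then show ?thesis
    by (simp add: Int_def vimage_def)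
qed

lemma arc_measure_eq_measure:
  assumes C2: "C2_curve a b c" and A: "{t \<in> {a..b}. c t \<in> S} \<in> sets borel"
  shows "arc_measure a b c S = measure (arc_length_measure a b c) {t \<in> {a..b}. c t \<in> S}"
proof -
  let ?A = "{t \<in> {a..b}. c t \<in> S}"
  have "(\<lambda>t. indicator ?A t * norm (tangent a b c t))
          = (\<lambda>t. indicator ?A t * (indicator {a..b} t * norm (tangent a b c t)))"
    by (auto simp: indicator_def fun_eq_iff)
  then have meas: "(\<lambda>t. indicator ?A t * norm (tangent a b c t)) \<in> borel_measurable borel"
    using A C2_curve_speed_borel_measurable[OF C2] by (simp add: borel_measurable_indicator)
  have "arc_measure a b c S = (\<integral>t. indicator ?A t * norm (tangent a b c t) \<partial>lborel)"
    unfolding arc_measure_def set_lebesgue_integral_def by simp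
  also have "\<dots> = enn2real (\<integral>\<^sup>+t. ennreal (indicator ?A t * norm (tangent a b c t)) \<partial>lborel)"
    using meas by (intro integral_eq_nn_integral) auto
  also have "(\<integral>\<^sup>+t. ennreal (indicator ?A t * norm (tangent a b c t)) \<partial>lborel)
               = (\<integral>\<^sup>+t. ennreal (norm (tangent a b c t)) * indicator ?A t \<partial>lborel)"
    by (intro nn_integral_cong) (simp split: split_indicator)
  also have "\<dots> = emeasure (arc_length_measure a b c) ?A"
    using A by (intro emeasure_arc_length_measure[OF C2, symmetric]) auto
  finally show ?thesis
    by (simp add: measure_def)
qed

lemma Ku_curve_arc_length_le_horizontal_increment:
  assumes K: "Ku_curve \<alpha> a b c" and "0 \<le> \<alpha>"
    and A: "A \<in> sets borel" "A \<subseteq> {s..t}" and st: "a \<le> s" "s \<le> t" "t \<le> b"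
  shows "emeasure (arc_length_measure a b c) A \<le> ennreal ((1 + \<alpha>) * \<bar>fst (c t) - fst (c s)\<bar>)"
proof -
  have "emeasure (arc_length_measure a b c) A
          = (\<integral>\<^sup>+u. ennreal (norm (tangent a b c u)) * indicator A u \<partial>lborel)"
    using K A st by (intro emeasure_arc_length_measure) (auto simp: Ku_curve_def)
  also have "\<dots> \<le> (\<integral>\<^sup>+u. ennreal ((1 + \<alpha>) * \<bar>fst (tangent a b c u)\<bar>) * indicator {s..t} u \<partial>lborel)"
  proof (rule nn_integral_mono)
    fix u
    show "ennreal (norm (tangent a b c u)) * indicator A u
            \<le> ennreal ((1 + \<alpha>) * \<bar>fst (tangent a b c u)\<bar>) * indicator {s..t} u"
    proof (cases "u \<in> A")
      case True
      then have "u \<in> {s..t}" "u \<in> {a..b}"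
        using A st by auto
      then have "norm (tangent a b c u) \<le> (1 + \<alpha>) * \<bar>fst (tangent a b c u)\<bar>"
        using K norm_le_Ku_cone unfolding Ku_curve_def by blast
      then show ?thesis
        using True \<open>u \<in> {s..t}\<close> by (simp add: ennreal_leI)
    qed simp
  qed
  also have "\<dots> = ennreal ((1 + \<alpha>) * \<bar>fst (c t) - fst (c s)\<bar>)"
    using \<open>0 \<le> \<alpha>\<close> by (intro nn_integral_has_integral_lebesgue' has_integral_mult_right
        Ku_curve_abs_fst_tangent_has_integral[OF K st]) auto
  finally show ?thesis .
qed

lemma Ku_curve_arc_length_strip_le:
  assumes K: "Ku_curve \<alpha> a b c" and "\<alpha> < 1"
    and xl: "\<alpha>-lipschitz_on {0..1} xl" and xr: "continuous_on {0..1} xr"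
    and width: "\<And>y. y \<in> {0..1} \<Longrightarrow> xr y - xl y \<le> \<delta>"
  shows "emeasure (arc_length_measure a b c) {t \<in> {a..b}. c t \<in> strip_between xl xr}
           \<le> ennreal (\<delta> / (1 - \<alpha>))"
proof -
  define A where "A = {t \<in> {a..b}. c t \<in> strip_between xl xr}"
  have "0 \<le> \<alpha>"
    using xl by (rule lipschitz_on_nonneg)
  have "closed A"
    unfolding A_def using K closed_strip_between[OF lipschitz_on_continuous_on[OF xl] xr]
    by (intro C2_curve_closed_preimage) (auto simp: Ku_curve_def)
  show ?thesis
  proof (cases "A = {}")
    case True
    show ?thesis
      unfolding A_def[symmetric] True by simp
  next
    case False
    have "bounded A"
      by (rule bounded_subset[OF bounded_closed_interval[of a b]]) (auto simp: A_def)
    with \<open>closed A\<close> have "compact A"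
      by (simp add: compact_eq_bounded_closed)
    obtain t1 where t1: "t1 \<in> A" "\<And>t. t \<in> A \<Longrightarrow> t1 \<le> t"
      using compact_attains_inf[OF \<open>compact A\<close> False] by blast
    obtain t2 where t2: "t2 \<in> A" "\<And>t. t \<in> A \<Longrightarrow> t \<le> t2"
      using compact_attains_sup[OF \<open>compact A\<close> False] by blast
    have tt: "a \<le> t1" "t1 \<le> t2" "t2 \<le> b"
      using t1 t2 by (auto simp: A_def)
    have chord: "\<bar>fst (c t2) - fst (c t1)\<bar> \<le> \<delta> / (1 - \<alpha>\<^sup>2)"
    proof (rule strip_between_chord_le[OF _ _ xl width _ \<open>\<alpha> < 1\<close>])
      show "(fst (c t1), snd (c t1)) \<in> strip_between xl xr"
        and "(fst (c t2), snd (c t2)) \<in> strip_between xl xr"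
        using t1(1) t2(1) by (auto simp: A_def)
      show "\<bar>snd (c t2) - snd (c t1)\<bar> \<le> \<alpha> * \<bar>fst (c t2) - fst (c t1)\<bar>"
        by (rule Ku_curve_snd_increment_le[OF K tt])
    qed
    have "emeasure (arc_length_measure a b c) A \<le> ennreal ((1 + \<alpha>) * \<bar>fst (c t2) - fst (c t1)\<bar>)"
      using \<open>closed A\<close> t1 t2
      by (intro Ku_curve_arc_length_le_horizontal_increment[OF K \<open>0 \<le> \<alpha>\<close> _ _ tt]) auto
    also have "\<dots> \<le> ennreal (\<delta> / (1 - \<alpha>))"
    proof (rule ennreal_leI)
      have "1 - \<alpha>\<^sup>2 = (1 - \<alpha>) * (1 + \<alpha>)"
        by (simp add: power2_eq_square algebra_simps)
      then have "(1 + \<alpha>) * (\<delta> / (1 - \<alpha>\<^sup>2)) = \<delta> / (1 - \<alpha>)"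
        using \<open>0 \<le> \<alpha>\<close> \<open>\<alpha> < 1\<close> by simp
      then show "(1 + \<alpha>) * \<bar>fst (c t2) - fst (c t1)\<bar> \<le> \<delta> / (1 - \<alpha>)"
        using mult_left_mono[OF chord, of "1 + \<alpha>"] \<open>0 \<le> \<alpha>\<close> by simp
    qed
    finally show ?thesis
      unfolding A_def .
  qed
qed

lemma Ku_curve_arc_length_curv_rect_le:
  assumes "Ku_curve \<alpha> a b c" and "\<alpha> < 1" and "curv_rect \<alpha> E"
  shows "emeasure (arc_length_measure a b c) {t \<in> {a..b}. c t \<in> E} \<le> ennreal (delta_max E / (1 - \<alpha>))"
proof -
  obtain xl xr where xl: "\<alpha>-lipschitz_on {0..1} xl" and xr: "\<alpha>-lipschitz_on {0..1} xr"
    and bounds: "\<And>y. y \<in> {0..1} \<Longrightarrow> 0 \<le> xl y \<and> xl y < xr y \<and> xr y \<le> 1"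
    and E: "E = strip_between xl xr"
    using curv_rect_strip_between[OF assms(3)] by blast
  have "xr y - xl y \<le> delta_max E" if "y \<in> {0..1}" for y
    unfolding E using lipschitz_on_continuous_on[OF xl] lipschitz_on_continuous_on[OF xr] bounds that
    by (intro strip_between_width_bounds(2) less_imp_le) auto
  then show ?thesis
    unfolding E using assms(1,2) xl lipschitz_on_continuous_on[OF xr]
    by (intro Ku_curve_arc_length_strip_le)
qed

lemma Ku_curve_arc_measure_UN_le:
  assumes K: "Ku_curve \<alpha> a b c" and "\<alpha> < 1" and rect: "\<And>i. curv_rect \<alpha> (E i)"
    and sum: "summable (\<lambda>i. delta_max (E i))"
  shows "arc_measure a b c (\<Union>i. E i) \<le> (\<Sum>i. delta_max (E i) / (1 - \<alpha>))"
proof -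
  define A where "A i = {t \<in> {a..b}. c t \<in> E i}" for i
  have C2: "C2_curve a b c"
    using K by (simp add: Ku_curve_def)
  have A: "A i \<in> sets borel" for i
    unfolding A_def using C2 curv_rect_closed[OF rect] by (intro borel_closed C2_curve_closed_preimage)
  have UN: "{t \<in> {a..b}. c t \<in> (\<Union>i. E i)} = (\<Union>i. A i)"
    by (auto simp: A_def)
  have nonneg: "0 \<le> delta_max (E i) / (1 - \<alpha>)" for i
    using curv_rect_delta_max_nonneg[OF rect] \<open>\<alpha> < 1\<close> by simp
  have "emeasure (arc_length_measure a b c) (\<Union>i. A i)
          \<le> (\<Sum>i. emeasure (arc_length_measure a b c) (A i))"
    using A by (intro emeasure_subadditive_countably) (auto simp: arc_length_measure_def)
  also have "\<dots> \<le> (\<Sum>i. ennreal (delta_max (E i) / (1 - \<alpha>)))"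
    unfolding A_def using K \<open>\<alpha> < 1\<close> rect by (intro suminf_le Ku_curve_arc_length_curv_rect_le) auto
  also have "\<dots> = ennreal (\<Sum>i. delta_max (E i) / (1 - \<alpha>))"
    using nonneg summable_divide[OF sum] by (rule suminf_ennreal2)
  finally have bound: "emeasure (arc_length_measure a b c) (\<Union>i. A i)
                        \<le> ennreal (\<Sum>i. delta_max (E i) / (1 - \<alpha>))" .
  have "{t \<in> {a..b}. c t \<in> (\<Union>i. E i)} \<in> sets borel"
    unfolding UN using A by auto
  then have "arc_measure a b c (\<Union>i. E i) = measure (arc_length_measure a b c) (\<Union>i. A i)"
    by (subst arc_measure_eq_measure[OF C2]) (simp_all only: UN)
  moreover have "0 \<le> (\<Sum>i. delta_max (E i) / (1 - \<alpha>))"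
    using summable_divide[OF sum] nonneg by (rule suminf_nonneg)
  ultimately show ?thesis
    unfolding measure_def using bound by (simp add: enn2real_leI)
qed

theorem lemma10p5:
  fixes \<alpha> \<epsilon> :: real and E :: "nat \<Rightarrow> (real \<times> real) set"
  assumes "0 < \<alpha>" and "\<alpha> < 1"
    and rect: "\<And>i. curv_rect \<alpha> (E i)"
    and G1: "\<And>i j. i \<noteq> j \<Longrightarrow> interior (E i) \<inter> interior (E j) = {}"
    and G2: "unit_square - (\<Union>i. interior (E i)) \<in> null_sets lborel"
    and G3: "summable (\<lambda>i. - delta_max (E i) * ln (delta_min (E i)))"
    and "\<epsilon> > 0"
  shows "\<exists>N::nat. N > 0 \<and> (\<forall>a b c. Ku_curve \<alpha> a b c \<and> c ` {a..b} \<subseteq> unit_square \<longrightarrow>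
            arc_measure a b c (\<Union>i\<in>{N..}. E i) < \<epsilon>)"
proof -
  have sum: "summable (\<lambda>i. delta_max (E i))"
    using rect G1 G3 by (rule summable_delta_max)
  obtain N where N: "\<And>n. n \<ge> N \<Longrightarrow> norm (\<Sum>i. delta_max (E (i + n)) / (1 - \<alpha>)) < \<epsilon>"
    using suminf_exist_split[OF \<open>\<epsilon> > 0\<close> summable_divide[OF sum]] by blast
  define n where "n = Suc N"
  have "arc_measure a b c (\<Union>i\<in>{n..}. E i) < \<epsilon>" if "Ku_curve \<alpha> a b c" for a b c
  proof -
    have "(\<Union>i\<in>{n..}. E i) = (\<Union>i. E (i + n))"
      by (auto simp: le_iff_add add.commute) (metis atLeast_iff le_add2)
    then have "arc_measure a b c (\<Union>i\<in>{n..}. E i) \<le> (\<Sum>i. delta_max (E (i + n)) / (1 - \<alpha>))"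
      using Ku_curve_arc_measure_UN_le[OF that \<open>\<alpha> < 1\<close> rect summable_ignore_initial_segment[OF sum]]
      by simp
    also have "\<dots> < \<epsilon>"
      using N[of n] by (simp add: n_def)
    finally show ?thesis .
  qed
  moreover have "n > 0"
    by (simp add: n_def)
  ultimately show ?thesis
    by blast
qed

end
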